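(* Let $A=(a_{ij})_{i,j=1}^n$ be an $n\times n$ matrix all of whose entries are $0$ or $1$, and such that $a_{ij}=1$ whenever $1\le j\le i\le n$. Then $$\det A=\prod_{i=2}^n(1-a_{i-1,i})=\begin{cases}1,& a_{i-1,i}=0 \text{ for all } 2\le i\le n,\\ 0,&\text{otherwise.}\end{cases}$$ *)

theory Defs
  imports "Jordan_Normal_Form.Determinant"
begin

end

theory Submission
  imports Defs
begin

text \<open>Subtracting from each row its predecessor (left multiplication by a unimodular
  lower bidiagonal matrix) turns a matrix whose lower triangle consists of ones into an
  upper triangular one with diagonal entries \<open>1\<close> and \<open>1 - a\<^sub>i\<^sub>-\<^sub>1\<^sub>,\<^sub>i\<close>.\<close>

definition row_difference_mat :: "nat \<Rightarrow> 'a :: comm_ring_1 mat" where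
  "row_difference_mat n = mat n n (\<lambda>(i, j).
     (if i = j then 1 else 0) - (if 0 < i \<and> j = i - 1 then 1 else 0))"

lemma row_difference_mat_carrier [simp]: "row_difference_mat n \<in> carrier_mat n n"
  by (simp add: row_difference_mat_def)

lemma det_row_difference_mat [simp]: "det (row_difference_mat n) = 1"
proof -
  have "det (row_difference_mat n :: 'a mat) = prod_list (diag_mat (row_difference_mat n))"
    by (rule det_lower_triangular[OF _ row_difference_mat_carrier]) (auto simp: row_difference_mat_def)
  also have "\<dots> = 1"
    unfolding prod_list_diag_prod by (auto simp: row_difference_mat_def intro!: prod.neutral)
  finally show ?thesis .
qed

lemma row_difference_mat_mult_index:
  fixes A :: "'a :: comm_ring_1 mat"
  assumes "A \<in> carrier_mat n m" and "i < n" and "j < m"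
  shows "(row_difference_mat n * A) $$ (i, j) = A $$ (i, j) - (if 0 < i then A $$ (i - 1, j) else 0)"
proof -
  have "(row_difference_mat n * A) $$ (i, j) =
      (\<Sum>k<n. ((if i = k then 1 else 0) - (if 0 < i \<and> k = i - 1 then 1 else 0)) * A $$ (k, j))"
    using assms by (auto simp: scalar_prod_def row_difference_mat_def lessThan_atLeast0 intro!: sum.cong)
  also have "\<dots> = (\<Sum>k<n. if i = k then A $$ (k, j) else 0)
      - (\<Sum>k<n. if 0 < i \<and> k = i - 1 then A $$ (k, j) else 0)"
    unfolding sum_subtractf[symmetric] by (rule sum.cong) auto
  also have "\<dots> = A $$ (i, j) - (if 0 < i then A $$ (i - 1, j) else 0)"
    using assms by (auto simp: sum.delta)
  finally show ?thesis .
qed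

lemma det_lower_ones_eq_prod_superdiag:
  fixes A :: "'a :: comm_ring_1 mat"
  assumes A: "A \<in> carrier_mat n n"
    and ones: "\<And>i j. j \<le> i \<Longrightarrow> i < n \<Longrightarrow> A $$ (i, j) = 1"
  shows "det A = (\<Prod>i\<in>{1..<n}. 1 - A $$ (i - 1, i))"
proof -
  define B where "B = row_difference_mat n * A"
  have B: "B \<in> carrier_mat n n"
    unfolding B_def using mult_carrier_mat[OF row_difference_mat_carrier A] .
  have B_index: "B $$ (i, j) = A $$ (i, j) - (if 0 < i then A $$ (i - 1, j) else 0)"
    if "i < n" "j < n" for i j
    unfolding B_def using row_difference_mat_mult_index[OF A that] .
  have "upper_triangular B"
    unfolding upper_triangular_def using B by (auto simp: B_index ones)
  have "det A = det B"
    unfolding B_def using det_mult[OF row_difference_mat_carrier A] by simp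
  also have "\<dots> = (\<Prod>i<n. B $$ (i, i))"
    using det_upper_triangular[OF \<open>upper_triangular B\<close> B] B
    by (simp add: prod_list_diag_prod lessThan_atLeast0)
  also have "\<dots> = (\<Prod>i\<in>{1..<n}. 1 - A $$ (i - 1, i))"
  proof (cases n)
    case (Suc m)
    have "(\<Prod>i<n. B $$ (i, i)) = B $$ (0, 0) * (\<Prod>i\<in>{1..<n}. B $$ (i, i))"
      using Suc by (simp add: lessThan_atLeast0 prod.atLeast_Suc_lessThan)
    also have "\<dots> = (\<Prod>i\<in>{1..<n}. 1 - A $$ (i - 1, i))"
      using Suc by (auto simp: B_index ones intro!: prod.cong)
    finally show ?thesis .
  qed simp
  finally show ?thesis .
qed

lemma prod_one_minus_zero_one:
  fixes x :: "'b \<Rightarrow> 'a :: comm_ring_1"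
  assumes "finite I" and "\<And>i. i \<in> I \<Longrightarrow> x i = 0 \<or> x i = 1"
  shows "(\<Prod>i\<in>I. 1 - x i) = (if \<forall>i\<in>I. x i = 0 then 1 else 0)"
proof (cases "\<forall>i\<in>I. x i = 0")
  case False
  then obtain i where "i \<in> I" "x i = 1" using assms(2) by blast
  then have "(\<Prod>i\<in>I. 1 - x i) = 0"
    using assms(1) by (intro prod_zero) auto
  with False show ?thesis by simp
qed simp

theorem lemma3p1:
  fixes A :: "real mat" and n :: nat
  assumes "A \<in> carrier_mat n n"
    and "\<And>i j. i < n \<Longrightarrow> j < n \<Longrightarrow> A $$ (i, j) = 0 \<or> A $$ (i, j) = 1"
    and "\<And>i j. j \<le> i \<Longrightarrow> i < n \<Longrightarrow> A $$ (i, j) = 1"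
  shows "det A = (\<Prod>i\<in>{1..<n}. 1 - A $$ (i - 1, i))
    \<and> det A = (if (\<forall>i\<in>{1..<n}. A $$ (i - 1, i) = 0) then 1 else 0)"
proof -
  have "det A = (\<Prod>i\<in>{1..<n}. 1 - A $$ (i - 1, i))"
    using det_lower_ones_eq_prod_superdiag[OF assms(1,3)] .
  moreover have "(\<Prod>i\<in>{1..<n}. 1 - A $$ (i - 1, i))
      = (if \<forall>i\<in>{1..<n}. A $$ (i - 1, i) = 0 then 1 else 0)"
  proof (rule prod_one_minus_zero_one)
    fix i assume "i \<in> {1..<n}"
    then show "A $$ (i - 1, i) = 0 \<or> A $$ (i - 1, i) = 1"
      using assms(2)[of "i - 1" i] by auto
  qed simp
  ultimately show ?thesis by simp
qed

end
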